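(* For every integer $k>1$ and $0<\gamma<\frac12$, $$k\,h(\gamma)-1\;\le\;F(k,\gamma)\;\le\;k\,h(\gamma)+\log\!\big(1+(1-2\gamma)^k\big)-1.$$ In particular $F(k,\gamma)=k\,h(\gamma)-1+O\big((1-2\gamma)^k\big)$ as $k\to\infty$.
   Context: Logarithms are base 2 and $h(t)=-t\log t-(1-t)\log(1-t)$. For real $k\ge 2$ and $\gamma\in(0,\frac12)$, $$F(k,\gamma)=\min_{x\in(0,1)}\Big[\log\big((1+x)^k+(1-x)^k\big)-k\gamma\log x-1\Big].$$ *)

theory Defs
  imports "HOL-Analysis.Analysis" "HOL-Library.Landau_Symbols"
begin

definition h :: "real \<Rightarrow> real" where
  "h t = - t * log 2 t - (1 - t) * log 2 (1 - t)"

text \<open>F(k,gamma) = min over x in (0,1) of log((1+x)^k+(1-x)^k) - k gamma log x - 1,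
  rendered as the infimum over the open interval (k real, real powers).\<close>
definition F :: "real \<Rightarrow> real \<Rightarrow> real" where
  "F k \<gamma> = (INF x\<in>{0<..<1::real}.
      log 2 ((1 + x) powr k + (1 - x) powr k) - k * \<gamma> * log 2 x - 1)"

end

theory Submission
  imports Defs
begin

text \<open>Every summand in the minimised expression satisfies
  \<open>log ((1+x)^k + (1-x)^k) \<ge> k log (1+x)\<close>, and concavity of the logarithm gives
  \<open>log (1+x) \<ge> h(\<gamma>) + \<gamma> log x\<close>, which is the lower bound. The concavity estimate is tight at
  the odds ratio \<open>x = \<gamma>/(1-\<gamma>)\<close>, and evaluating the expression there gives the upper bound;
  the error term \<open>log (1 + (1-2\<gamma>)^k)\<close> is at most \<open>(1-2\<gamma>)^k / ln 2\<close>.\<close>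

definition F_objective :: "real \<Rightarrow> real \<Rightarrow> real \<Rightarrow> real" where
  "F_objective k \<gamma> x = log 2 ((1 + x) powr k + (1 - x) powr k) - k * \<gamma> * log 2 x - 1"

lemma F_eq_INF_objective: "F k \<gamma> = (INF x\<in>{0<..<1}. F_objective k \<gamma> x)"
  unfolding F_def F_objective_def ..

lemma entropy_plus_log_le_log_one_plus:
  fixes g x :: real
  assumes "0 < g" "g < 1" "0 < x"
  shows "h g + g * log 2 x \<le> log 2 (1 + x)"
proof -
  have "(1 - g) * log 2 (1 / (1 - g)) + g * log 2 (x / g)
        \<le> log 2 ((1 - g) *\<^sub>R (1 / (1 - g)) + g *\<^sub>R (x / g))"
    by (rule concave_onD[OF log_concave]) (use assms in auto)
  also have "(1 - g) *\<^sub>R (1 / (1 - g)) + g *\<^sub>R (x / g) = 1 + x"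
    using assms by simp
  finally show ?thesis
    using assms by (simp add: h_def log_divide algebra_simps)
qed

lemma F_objective_lower_bound:
  fixes k g x :: real
  assumes "0 \<le> k" "0 < g" "g < 1" "0 < x" "x < 1"
  shows "k * h g - 1 \<le> F_objective k g x"
proof -
  have "k * (h g + g * log 2 x) \<le> k * log 2 (1 + x)"
    using entropy_plus_log_le_log_one_plus[OF assms(2-4)] assms(1) by (rule mult_left_mono)
  also have "\<dots> = log 2 ((1 + x) powr k)"
    using assms by (simp add: log_powr)
  also have "\<dots> \<le> log 2 ((1 + x) powr k + (1 - x) powr k)"
    using assms by (subst log_le_cancel_iff) (auto intro: add_pos_nonneg)
  finally show ?thesis
    unfolding F_objective_def by (simp add: algebra_simps)
qed

lemma F_objective_at_odds_ratio:
  fixes k g :: real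
  assumes "0 < g" "g < 1/2"
  shows "F_objective k g (g / (1 - g)) = k * h g + log 2 (1 + (1 - 2*g) powr k) - 1"
proof -
  have "1 + g / (1 - g) = 1 / (1 - g)" and "1 - g / (1 - g) = (1 - 2*g) / (1 - g)"
    using assms by (auto simp: field_simps)
  then have "(1 + g / (1 - g)) powr k + (1 - g / (1 - g)) powr k
        = (1 + (1 - 2*g) powr k) / (1 - g) powr k"
    using assms by (simp add: powr_divide add_divide_distrib)
  moreover have "0 < 1 + (1 - 2*g) powr k"
    by (simp add: add_pos_nonneg)
  ultimately show ?thesis
    using assms unfolding F_objective_def
    by (simp add: h_def log_divide log_powr algebra_simps)
qed

lemma F_bounds:
  fixes k g :: real
  assumes "0 \<le> k" "0 < g" "g < 1/2"
  shows "k * h g - 1 \<le> F k g"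
    and "F k g \<le> k * h g + log 2 (1 + (1 - 2*g) powr k) - 1"
proof -
  have lower: "\<And>x. x \<in> {0<..<1} \<Longrightarrow> k * h g - 1 \<le> F_objective k g x"
    using F_objective_lower_bound assms by auto
  show "k * h g - 1 \<le> F k g"
    unfolding F_eq_INF_objective by (rule cINF_greatest) (use lower in auto)
  have odds: "g / (1 - g) \<in> {0<..<1}"
    using assms by (auto simp: field_simps)
  have "F k g \<le> F_objective k g (g / (1 - g))"
    unfolding F_eq_INF_objective
    by (rule cINF_lower[OF bdd_belowI2[OF lower] odds])
  then show "F k g \<le> k * h g + log 2 (1 + (1 - 2*g) powr k) - 1"
    using F_objective_at_odds_ratio[OF assms(2,3)] by simp
qed

lemma log_one_plus_le: "0 \<le> y \<Longrightarrow> log 2 (1 + y) \<le> y / ln 2"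
  using ln_add_one_self_le_self[of y] by (simp add: log_def divide_right_mono)

theorem mainTheorem12:
  fixes \<gamma> :: real
  assumes "0 < \<gamma>" and "\<gamma> < 1/2"
  shows "(\<forall>k::nat. k > 1 \<longrightarrow>
            real k * h \<gamma> - 1 \<le> F (real k) \<gamma> \<and>
            F (real k) \<gamma> \<le> real k * h \<gamma> + log 2 (1 + (1 - 2*\<gamma>) ^ k) - 1)
       \<and> (\<lambda>k::nat. F (real k) \<gamma> - (real k * h \<gamma> - 1)) \<in> O(\<lambda>k. (1 - 2*\<gamma>) ^ k)"
proof -
  have powr_eq: "(1 - 2*\<gamma>) powr real k = (1 - 2*\<gamma>) ^ k" for k :: nat
    using assms by (simp add: powr_realpow)
  have lower: "real k * h \<gamma> - 1 \<le> F (real k) \<gamma>"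
    and upper: "F (real k) \<gamma> \<le> real k * h \<gamma> + log 2 (1 + (1 - 2*\<gamma>) ^ k) - 1" for k :: nat
    using F_bounds[of "real k", OF _ assms] by (simp_all add: powr_eq)
  have "norm (F (real k) \<gamma> - (real k * h \<gamma> - 1)) \<le> 1 / ln 2 * norm ((1 - 2*\<gamma>) ^ k)" for k :: nat
  proof -
    have "norm (F (real k) \<gamma> - (real k * h \<gamma> - 1)) \<le> log 2 (1 + (1 - 2*\<gamma>) ^ k)"
      using lower[of k] upper[of k] by simp
    also have "\<dots> \<le> (1 - 2*\<gamma>) ^ k / ln 2"
      using assms by (intro log_one_plus_le) simp
    finally show ?thesis
      using assms by simp
  qed
  then have "(\<lambda>k::nat. F (real k) \<gamma> - (real k * h \<gamma> - 1)) \<in> O(\<lambda>k. (1 - 2*\<gamma>) ^ k)"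
    by (intro bigoI[where c = "1 / ln 2"] always_eventually allI)
  with lower upper show ?thesis
    by blast
qed

end
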